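(* Let $X$ be a Banach space which is isomorphic to its hyperplanes (closed subspaces of codimension one), and let $T$ be a Fredholm operator on $X$. Then the identity operator on $X$ factors through $T$, i.e. there are bounded operators $R,S$ on $X$ with $I_X=STR$. *)

theory Defs
  imports "HOL-Analysis.Analysis"
begin

definition closed_hyperplane :: "'a::real_normed_vector set \<Rightarrow> bool" where
  "closed_hyperplane H \<longleftrightarrow> subspace H \<and> closed H \<and> H \<noteq> UNIV \<and>
     (\<exists>v. span (insert v H) = UNIV)"

text \<open>X is isomorphic (as a normed space) to the subspace H: a bounded linear
  bijection of X onto H with bounded inverse
  (the inverse H \<rightarrow> X is bounded iff norm x \<le> K * norm (f x)).\<close>
definition isomorphic_to_subspace :: "'a::real_normed_vector set \<Rightarrow> bool" where
  "isomorphic_to_subspace H \<longleftrightarrow> (\<exists>f::'a \<Rightarrow> 'a. bounded_linear f \<and> inj f \<and> range f = H \<and>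
     (\<exists>K. \<forall>x. norm x \<le> K * norm (f x)))"

definition iso_to_hyperplanes :: "'a::real_normed_vector itself \<Rightarrow> bool" where
  "iso_to_hyperplanes _ \<longleftrightarrow> (\<forall>H::'a set. closed_hyperplane H \<longrightarrow> isomorphic_to_subspace H)"

definition fredholm :: "('a::real_normed_vector \<Rightarrow> 'a) \<Rightarrow> bool" where
  "fredholm T \<longleftrightarrow> bounded_linear T \<and>
     (\<exists>B. finite B \<and> span B = {x. T x = 0}) \<and>
     closed (range T) \<and>
     (\<exists>C. finite C \<and> span (range T \<union> C) = UNIV)"

end

theory Submission
  imports Defs
begin

text \<open>
  If \<open>c\<close> is not in the range of an injective operator \<open>T\<close> with closed range, Hahn-Banach gives a
  closed hyperplane \<open>H\<close> containing \<open>range T\<close> but not \<open>c\<close>. If \<open>f\<close> is an isomorphism of \<open>X\<close>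
  onto \<open>H\<close> and \<open>S\<close> is the projection onto \<open>H\<close> along \<open>c\<close> followed by the inverse of \<open>f\<close>, then
  \<open>S \<circ> T\<close> is injective with closed range of codimension one less. Dually, if \<open>T v = 0\<close> with
  \<open>v \<noteq> 0\<close>, an isomorphism \<open>f\<close> onto a hyperplane complementing \<open>v\<close> gives \<open>T \<circ> f\<close> with the same
  range and a kernel of dimension one less. After finitely many steps the operator is bijective,
  hence has a bounded inverse by the open mapping theorem, and the identity factors through it;
  composing with the bounded maps used along the way, it factors through \<open>T\<close>.
\<close>

text \<open>Partial linear functionals dominated by \<open>p\<close>, represented by their graphs.\<close>

definition dominated_graph :: "('a::real_vector \<Rightarrow> real) \<Rightarrow> ('a \<times> real) set \<Rightarrow> bool" where
  "dominated_graph p F \<longleftrightarrow> subspace F \<and> (\<forall>a. (0, a) \<in> F \<longrightarrow> a = 0) \<and> (\<forall>x a. (x, a) \<in> F \<longrightarrow> a \<le> p x)"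

lemma dominated_graph_functional:
  assumes "dominated_graph p F" "(x, a) \<in> F" "(x, b) \<in> F"
  shows "a = b"
proof -
  have "(x, a) - (x, b) \<in> F"
    using assms subspace_diff[of F "(x, a)" "(x, b)"] by (simp add: dominated_graph_def)
  then show ?thesis
    using assms(1) by (auto simp: dominated_graph_def)
qed

lemma dominated_graph_Union_chain:
  assumes "C \<noteq> {}" and dom: "\<And>F. F \<in> C \<Longrightarrow> dominated_graph p F"
    and ch: "\<And>F G. F \<in> C \<Longrightarrow> G \<in> C \<Longrightarrow> F \<subseteq> G \<or> G \<subseteq> F"
  shows "dominated_graph p (\<Union>C)"
proof -
  have "subspace (\<Union>C)"
    unfolding subspace_def
  proof (intro conjI ballI allI)
    show "0 \<in> \<Union>C"
      using assms(1) dom by (auto simp: dominated_graph_def intro: subspace_0)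
  next
    fix u v assume "u \<in> \<Union>C" "v \<in> \<Union>C"
    then obtain F G where FG: "F \<in> C" "G \<in> C" "u \<in> F" "v \<in> G" by blast
    then have "u + v \<in> F \<or> u + v \<in> G"
      using ch[OF FG(1,2)] dom[OF FG(1)] dom[OF FG(2)]
      by (auto simp: dominated_graph_def intro: subspace_add)
    then show "u + v \<in> \<Union>C" using FG by blast
  next
    fix r u assume "u \<in> \<Union>C"
    then show "r *\<^sub>R u \<in> \<Union>C"
      using dom by (auto simp: dominated_graph_def intro: subspace_scale)
  qed
  then show ?thesis
    using dom by (auto simp: dominated_graph_def)
qed

lemma dominated_graph_extension_constant:
  assumes sub: "\<And>x y. p (x + y) \<le> p x + p y"
    and F: "dominated_graph p F"
  obtains \<alpha> where "\<And>y b. (y, b) \<in> F \<Longrightarrow> b - p (y - x0) \<le> \<alpha>"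
    and "\<And>z b. (z, b) \<in> F \<Longrightarrow> \<alpha> \<le> p (z + x0) - b"
proof -
  have key: "b - p (y - x0) \<le> p (z + x0) - b'" if "(y, b) \<in> F" "(z, b') \<in> F" for y b z b'
  proof -
    have "(y + z, b + b') \<in> F"
      using subspace_add[of F "(y, b)" "(z, b')"] F that by (simp add: dominated_graph_def)
    then have "b + b' \<le> p ((y - x0) + (z + x0))"
      using F by (simp add: dominated_graph_def)
    also have "\<dots> \<le> p (y - x0) + p (z + x0)" by (rule sub)
    finally show ?thesis by simp
  qed
  define L where "L = {b - p (y - x0) | y b. (y, b) \<in> F}"
  have "(0, 0) \<in> F"
    using F subspace_0[of F] by (simp add: dominated_graph_def zero_prod_def)
  then have "L \<noteq> {}" and "bdd_above L"
    using key[of _ _ 0 0] by (auto simp: L_def intro!: bdd_aboveI)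
  show ?thesis
  proof (rule that)
    show "b - p (y - x0) \<le> Sup L" if "(y, b) \<in> F" for y b
      using that \<open>bdd_above L\<close> by (auto simp: L_def intro!: cSup_upper)
    show "Sup L \<le> p (z + x0) - b" if "(z, b) \<in> F" for z b
      using that \<open>L \<noteq> {}\<close> key by (auto simp: L_def intro!: cSup_least)
  qed
qed

lemma dominated_graph_extension_bound:
  assumes hom: "\<And>t x. t \<ge> 0 \<Longrightarrow> p (t *\<^sub>R x) = t * p x"
    and F: "dominated_graph p F"
    and lo: "\<And>y b. (y, b) \<in> F \<Longrightarrow> b - p (y - x0) \<le> \<alpha>"
    and up: "\<And>z b. (z, b) \<in> F \<Longrightarrow> \<alpha> \<le> p (z + x0) - b"
    and t: "(x - t *\<^sub>R x0, a - t * \<alpha>) \<in> F"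
  shows "a \<le> p x"
proof -
  have "subspace F"
    using F by (simp add: dominated_graph_def)
  then have scale: "(r *\<^sub>R (x - t *\<^sub>R x0), r * (a - t * \<alpha>)) \<in> F" for r
    using subspace_scale[OF _ t, of r] by simp
  consider "t = 0" | "t > 0" | "t < 0"
    by linarith
  then show ?thesis
  proof cases
    case 1
    then show ?thesis
      using t F by (simp add: dominated_graph_def)
  next
    case 2
    have "\<alpha> \<le> p ((1 / t) *\<^sub>R (x - t *\<^sub>R x0) + x0) - (1 / t) * (a - t * \<alpha>)"
      using up[OF scale] .
    also have "(1 / t) *\<^sub>R (x - t *\<^sub>R x0) + x0 = (1 / t) *\<^sub>R x"
      using 2 by (simp add: algebra_simps)
    finally show ?thesis
      using 2 hom[of "1 / t" x] by (simp add: field_simps)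
  next
    case 3
    have "(- 1 / t) * (a - t * \<alpha>) - p ((- 1 / t) *\<^sub>R (x - t *\<^sub>R x0) - x0) \<le> \<alpha>"
      using lo[OF scale] .
    also have "(- 1 / t) *\<^sub>R (x - t *\<^sub>R x0) - x0 = (- 1 / t) *\<^sub>R x"
      using 3 by (simp add: algebra_simps)
    finally show ?thesis
      using 3 hom[of "- 1 / t" x] by (simp add: field_simps)
  qed
qed

lemma dominated_graph_extend:
  assumes sub: "\<And>x y. p (x + y) \<le> p x + p y"
    and hom: "\<And>t x. t \<ge> 0 \<Longrightarrow> p (t *\<^sub>R x) = t * p x"
    and F: "dominated_graph p F" and x0: "\<nexists>a. (x0, a) \<in> F"
  obtains \<alpha> where "dominated_graph p (span (insert (x0, \<alpha>) F))"
proof -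
  obtain \<alpha> where lo: "\<And>y b. (y, b) \<in> F \<Longrightarrow> b - p (y - x0) \<le> \<alpha>"
    and up: "\<And>z b. (z, b) \<in> F \<Longrightarrow> \<alpha> \<le> p (z + x0) - b"
    using dominated_graph_extension_constant[OF sub F] by blast
  have Fsub: "subspace F"
    using F by (simp add: dominated_graph_def)
  have mem: "(x, a) \<in> span (insert (x0, \<alpha>) F) \<longleftrightarrow> (\<exists>t. (x - t *\<^sub>R x0, a - t * \<alpha>) \<in> F)" for x a
    by (simp add: span_breakdown_eq span_eq_iff[THEN iffD2, OF Fsub])
  have "a = 0" if a: "(0, a) \<in> span (insert (x0, \<alpha>) F)" for a
  proof -
    obtain t where t: "(- (t *\<^sub>R x0), a - t * \<alpha>) \<in> F"
      using a mem by auto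
    have "t = 0"
    proof (rule ccontr)
      assume "t \<noteq> 0"
      then have "(x0, (- 1 / t) * (a - t * \<alpha>)) \<in> F"
        using subspace_scale[OF Fsub t, of "- 1 / t"] by simp
      with x0 show False
        by blast
    qed
    then show ?thesis
      using t F by (simp add: dominated_graph_def)
  qed
  moreover have "a \<le> p x" if "(x, a) \<in> span (insert (x0, \<alpha>) F)" for x a
    using that mem dominated_graph_extension_bound[OF hom F lo up] by blast
  ultimately show ?thesis
    using that[of \<alpha>] by (simp add: dominated_graph_def)
qed

lemma dominated_graph_total_extension:
  assumes sub: "\<And>x y. p (x + y) \<le> p x + p y"
    and hom: "\<And>t x. t \<ge> 0 \<Longrightarrow> p (t *\<^sub>R x) = t * p x"
    and F0: "dominated_graph p F0"
  obtains F where "F0 \<subseteq> F" "dominated_graph p F" "\<And>x. \<exists>a. (x, a) \<in> F"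
proof -
  define A where "A = {F. F0 \<subseteq> F \<and> dominated_graph p F}"
  have "\<exists>U\<in>A. \<forall>F\<in>C. F \<subseteq> U" if C: "C \<in> chains A" for C
  proof (cases "C = {}")
    case True
    then show ?thesis using F0 by (auto simp: A_def)
  next
    case False
    have CA: "\<And>F. F \<in> C \<Longrightarrow> F0 \<subseteq> F \<and> dominated_graph p F"
      using chainsD2[OF C] by (auto simp: A_def)
    have "dominated_graph p (\<Union>C)"
      using False CA chainsD[OF C] by (intro dominated_graph_Union_chain) blast+
    moreover have "F0 \<subseteq> \<Union>C"
      using False CA by blast
    ultimately show ?thesis
      unfolding A_def by blast
  qed
  then obtain F where "F \<in> A" and "\<forall>G\<in>A. F \<subseteq> G \<longrightarrow> G = F"
    using Zorn_Lemma2[of A] by blast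
  then have F: "F0 \<subseteq> F" "dominated_graph p F"
    and max: "\<And>G. F0 \<subseteq> G \<Longrightarrow> dominated_graph p G \<Longrightarrow> F \<subseteq> G \<Longrightarrow> G = F"
    by (auto simp: A_def)
  have "\<exists>a. (x, a) \<in> F" for x
  proof (rule ccontr)
    assume x: "\<nexists>a. (x, a) \<in> F"
    obtain \<alpha> where ext: "dominated_graph p (span (insert (x, \<alpha>) F))"
      using dominated_graph_extend[OF sub hom F(2) x] .
    have "insert (x, \<alpha>) F \<subseteq> span (insert (x, \<alpha>) F)"
      by (rule span_superset)
    then have "span (insert (x, \<alpha>) F) = F"
      using F(1) by (intro max ext) auto
    then show False
      using x \<open>insert (x, \<alpha>) F \<subseteq> _\<close> by blast
  qed
  with F that show ?thesis
    by blast
qed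

lemma Hahn_Banach_graph:
  assumes sub: "\<And>x y. p (x + y) \<le> p x + p y"
    and hom: "\<And>t x. t \<ge> 0 \<Longrightarrow> p (t *\<^sub>R x) = t * p x"
    and F0: "dominated_graph p F0"
  obtains g where "linear g" "\<And>x a. (x, a) \<in> F0 \<Longrightarrow> g x = a" "\<And>x. g x \<le> p x"
proof -
  obtain F where F0F: "F0 \<subseteq> F" and F: "dominated_graph p F" and total: "\<And>x. \<exists>a. (x, a) \<in> F"
    using dominated_graph_total_extension[OF sub hom F0] by blast
  define g where "g x = (SOME a. (x, a) \<in> F)" for x
  have gF: "(x, g x) \<in> F" for x
    unfolding g_def using total by (rule someI_ex)
  have g_eq: "g x = a" if "(x, a) \<in> F" for x a
    using dominated_graph_functional[OF F gF that] .
  have Fsub: "subspace F" using F by (simp add: dominated_graph_def)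
  have "linear g"
  proof
    show "g (x + y) = g x + g y" for x y
      using subspace_add[OF Fsub gF gF, of x y] by (intro g_eq) simp
    show "g (r *\<^sub>R x) = r *\<^sub>R g x" for r x
      using subspace_scale[OF Fsub gF, of r x] by (intro g_eq) simp
  qed
  moreover have "g x \<le> p x" for x
    using F gF by (simp add: dominated_graph_def)
  ultimately show ?thesis
    using that F0F g_eq by blast
qed

text \<open>The graph of \<open>y + a *\<^sub>R c \<mapsto> a\<close> on \<open>Y + span {c}\<close>.\<close>

lemma dominated_graph_line:
  fixes Y :: "'a::real_normed_vector set"
  assumes Y: "subspace Y" and d: "d > 0" "\<And>y. y \<in> Y \<Longrightarrow> d \<le> norm (c - y)"
  shows "dominated_graph (\<lambda>x. norm x / d) {(x, a). x - a *\<^sub>R c \<in> Y}"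
proof -
  define F where "F = {(x :: 'a, a). x - a *\<^sub>R c \<in> Y}"
  have "linear (\<lambda>(x :: 'a, a :: real). x - a *\<^sub>R c)"
    by (intro linearI) (auto simp: algebra_simps)
  then have "subspace F"
    using linear_subspace_vimage[OF _ Y] by (simp add: F_def vimage_def case_prod_unfold)
  moreover have bound: "a \<le> norm x / d" if "(x, a) \<in> F" for x a
  proof (cases "a = 0")
    case True
    then show ?thesis using d(1) by simp
  next
    case False
    have "(- 1 / a) *\<^sub>R (x - a *\<^sub>R c) \<in> Y"
      using that by (intro subspace_scale[OF Y]) (simp add: F_def)
    then have "d \<le> norm (c - (- 1 / a) *\<^sub>R (x - a *\<^sub>R c))"
      by (rule d(2))
    also have "c - (- 1 / a) *\<^sub>R (x - a *\<^sub>R c) = (1 / a) *\<^sub>R x"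
      using False by (simp add: algebra_simps)
    finally have "\<bar>a\<bar> * d \<le> norm x"
      using False by (simp add: field_simps)
    then have "\<bar>a\<bar> \<le> norm x / d"
      using d(1) by (simp add: pos_le_divide_eq)
    then show ?thesis
      by linarith
  qed
  moreover have "a = 0" if "(0, a) \<in> F" for a
  proof -
    have "(0, - a) \<in> F"
      using that subspace_neg[OF Y, of "- (a *\<^sub>R c)"] by (simp add: F_def)
    then show ?thesis
      using bound[OF that] bound[of 0 "- a"] by simp
  qed
  ultimately show ?thesis
    by (simp add: dominated_graph_def F_def)
qed

lemma bounded_functional_separating_point:
  fixes Y :: "'a::real_normed_vector set"
  assumes Y: "subspace Y" "closed Y" and c: "c \<notin> Y"
  obtains \<phi> :: "'a \<Rightarrow> real" where "bounded_linear \<phi>" "\<And>y. y \<in> Y \<Longrightarrow> \<phi> y = 0" "\<phi> c = 1"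
proof -
  obtain d where d: "d > 0" "\<And>y. y \<in> Y \<Longrightarrow> d \<le> norm (c - y)"
  proof -
    obtain e where "e > 0" "ball c e \<subseteq> - Y"
      using Y(2) c open_contains_ball[of "- Y"] by (auto simp: open_Compl)
    then show ?thesis
      using that[of e] by (force simp: dist_norm subset_iff)
  qed
  have sub: "norm (x + y) / d \<le> norm x / d + norm y / d" for x y
    using d(1) norm_triangle_ineq[of x y] by (simp add: add_divide_distrib[symmetric] divide_right_mono)
  have hom: "norm (t *\<^sub>R x) / d = t * (norm x / d)" if "t \<ge> 0" for t x
    using that by simp
  obtain g where g: "linear g" "\<And>x a. (x, a) \<in> {(x, a). x - a *\<^sub>R c \<in> Y} \<Longrightarrow> g x = a"
    and g_le: "\<And>x. g x \<le> norm x / d"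
    by (rule Hahn_Banach_graph[OF sub hom dominated_graph_line[OF Y(1) d]]) (assumption | rule that)+
  interpret g: linear g by fact
  have "bounded_linear g"
  proof (rule bounded_linear_intro[where K = "1 / d"])
    show "norm (g x) \<le> norm x * (1 / d)" for x
      using g_le[of x] g_le[of "- x"] by (auto simp: g.neg abs_le_iff)
  qed (simp_all add: g.add g.scale)
  moreover have "g y = 0" if "y \<in> Y" for y
    using g(2)[of y 0] that by simp
  moreover have "g c = 1"
    using g(2)[of c 1] subspace_0[OF Y(1)] by simp
  ultimately show ?thesis
    using that by blast
qed

lemma Baire_closed_cover:
  fixes F :: "nat \<Rightarrow> 'a::complete_space set"
  assumes "\<And>n. closed (F n)" and "(\<Union>n. F n) = UNIV"
  shows "\<exists>n. interior (F n) \<noteq> {}"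
proof (rule ccontr)
  assume "\<nexists>n. interior (F n) \<noteq> {}"
  then have "euclidean interior_of (\<Union>n. F n) = {}"
    using assms(1) by (intro Baire_category_alt) (auto simp: completely_metrizable_space_euclidean)
  then show False
    using assms(2) by simp
qed

lemma surj_closure_image_ball_contains_ball:
  fixes T :: "'a::real_normed_vector \<Rightarrow> 'b::banach"
  assumes "surj T"
  obtains \<rho> y e where "e > 0" "ball y e \<subseteq> closure (T ` ball 0 \<rho>)"
proof -
  have "z \<in> (\<Union>n::nat. closure (T ` ball 0 (real n)))" for z
  proof -
    obtain x where "z = T x"
      using assms by (metis surjD)
    moreover obtain n :: nat where "norm x < real n"
      using reals_Archimedean2 by blast
    ultimately have "z \<in> closure (T ` ball 0 (real n))"
      using closure_subset by fastforce
    then show ?thesis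
      by blast
  qed
  then have "(\<Union>n::nat. closure (T ` ball 0 (real n))) = UNIV"
    by blast
  then obtain n :: nat where "interior (closure (T ` ball 0 (real n))) \<noteq> {}"
    using Baire_closed_cover[of "\<lambda>n. closure (T ` ball 0 (real n))"] by blast
  then obtain y where "y \<in> interior (closure (T ` ball 0 (real n)))"
    by blast
  then obtain e where "e > 0" and "ball y e \<subseteq> interior (closure (T ` ball 0 (real n)))"
    using open_contains_ball open_interior by blast
  then show ?thesis
    using interior_subset that by blast
qed

lemma linear_closure_image_ball_centred:
  fixes T :: "'a::real_normed_vector \<Rightarrow> 'b::real_normed_vector"
  assumes T: "linear T" and sub: "ball y e \<subseteq> closure (T ` ball 0 \<rho>)"
  shows "ball 0 e \<subseteq> closure (T ` ball 0 (2 * \<rho>))"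
proof
  fix w :: 'b assume w: "w \<in> ball 0 e"
  then have "e > 0"
    using norm_ge_zero[of w] by (simp only: mem_ball_0)
  then have yw: "y + w \<in> closure (T ` ball 0 \<rho>)" and y: "y \<in> closure (T ` ball 0 \<rho>)"
    using sub w by (auto simp: dist_norm subset_iff)
  show "w \<in> closure (T ` ball 0 (2 * \<rho>))"
    unfolding closure_approachable
  proof (intro allI impI)
    fix \<delta> :: real assume "\<delta> > 0"
    then have \<delta>: "\<delta> / 2 > 0"
      by simp
    obtain x1 where x1: "norm x1 < \<rho>" "dist (T x1) (y + w) < \<delta> / 2"
      using yw[unfolded closure_approachable, rule_format, OF \<delta>] by auto
    obtain x2 where x2: "norm x2 < \<rho>" "dist (T x2) y < \<delta> / 2"
      using y[unfolded closure_approachable, rule_format, OF \<delta>] by auto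
    have norm_diff: "norm (x1 - x2) < 2 * \<rho>"
      using x1(1) x2(1) norm_triangle_ineq4[of x1 x2] by linarith
    have "dist (T (x1 - x2)) w = norm ((T x1 - (y + w)) - (T x2 - y))"
      by (simp add: dist_norm linear_diff[OF T] algebra_simps)
    also have "\<dots> \<le> norm (T x1 - (y + w)) + norm (T x2 - y)"
      by (rule norm_triangle_ineq4)
    also have "\<dots> < \<delta>"
      using x1(2) x2(2) by (simp add: dist_norm)
    finally show "\<exists>u\<in>T ` ball 0 (2 * \<rho>). dist u w < \<delta>"
      using norm_diff by auto
  qed
qed

lemma linear_approx_preimage:
  fixes T :: "'a::real_normed_vector \<Rightarrow> 'b::real_normed_vector"
  assumes T: "linear T" and e: "e > 0" and sub: "ball 0 e \<subseteq> closure (T ` ball 0 \<rho>)"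
    and \<delta>: "\<delta> > 0"
  shows "\<exists>x. norm x \<le> (2 * \<rho> / e) * norm z \<and> norm (T x - z) < \<delta>"
proof (cases "z = 0")
  case True
  then show ?thesis
    using \<delta> linear_0[OF T] by (intro exI[of _ 0]) simp
next
  case False
  define s where "s = e / (2 * norm z)"
  have s: "s > 0"
    using False e by (simp add: s_def)
  have "s *\<^sub>R z \<in> closure (T ` ball 0 \<rho>)"
    using sub False e by (auto simp: s_def)
  then have "\<exists>x'\<in>ball 0 \<rho>. norm (T x' - s *\<^sub>R z) < \<delta> * s"
    using \<delta> s by (auto simp: closure_approachable dist_norm)
  then obtain x' where x': "norm x' < \<rho>" "norm (T x' - s *\<^sub>R z) < \<delta> * s"
    by auto
  have "norm ((1 / s) *\<^sub>R x') \<le> (2 * \<rho> / e) * norm z"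
    using x'(1) s False e by (simp add: s_def field_simps)
  moreover have "T ((1 / s) *\<^sub>R x') - z = (1 / s) *\<^sub>R (T x' - s *\<^sub>R z)"
    using s by (simp add: linear_scale[OF T] algebra_simps)
  moreover have "norm (T x' - s *\<^sub>R z) / s < \<delta>"
    using x'(2) s by (simp add: field_simps)
  ultimately show ?thesis
    using s by (intro exI[of _ "(1 / s) *\<^sub>R x'"]) simp
qed

lemma approx_preimage_series:
  fixes T :: "'a::real_normed_vector \<Rightarrow> 'b::real_normed_vector"
  assumes T: "linear T" and c: "c \<ge> 0"
    and approx: "\<And>w \<delta>. \<delta> > 0 \<Longrightarrow> \<exists>x. norm x \<le> c * norm w \<and> norm (T x - w) < \<delta>"
  obtains xs where "\<And>k. norm (xs k) \<le> c * norm z * (1 / 2) ^ k" "(\<lambda>k. T (xs k)) sums z"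
proof (cases "z = 0")
  case True
  then show ?thesis
    using that[of "\<lambda>_. 0"] linear_0[OF T] by simp
next
  case False
  define \<epsilon> where "\<epsilon> = norm z"
  have \<epsilon>: "\<epsilon> > 0"
    using False by (simp add: \<epsilon>_def)
  have "\<forall>k w. \<exists>x. norm x \<le> c * norm w \<and> norm (T x - w) < \<epsilon> / 2 ^ Suc k"
    using approx \<epsilon> by simp
  then obtain pick where pick: "\<And>k w. norm (pick k w) \<le> c * norm w \<and> norm (T (pick k w) - w) < \<epsilon> / 2 ^ Suc k"
    by metis
  text \<open>\<open>zs k\<close> is the residual left after correcting \<open>k\<close> times.\<close>
  define zs where "zs = rec_nat z (\<lambda>k w. w - T (pick k w))"
  define xs where "xs k = pick k (zs k)" for k
  have zs_Suc: "zs (Suc k) = zs k - T (xs k)" for k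
    by (simp add: zs_def xs_def)
  have zs_bound: "norm (zs k) \<le> \<epsilon> / 2 ^ k" for k
  proof (cases k)
    case (Suc m)
    have "norm (zs k) = norm (T (pick m (zs m)) - zs m)"
      using Suc by (simp add: zs_Suc xs_def norm_minus_commute)
    then show ?thesis
      using pick[of m "zs m"] Suc by simp
  qed (simp add: zs_def \<epsilon>_def)
  have "norm (xs k) \<le> c * norm z * (1 / 2) ^ k" for k
  proof -
    have "norm (xs k) \<le> c * norm (zs k)"
      using pick by (simp add: xs_def)
    also have "\<dots> \<le> c * (\<epsilon> / 2 ^ k)"
      using zs_bound[of k] c by (rule mult_left_mono)
    finally show ?thesis
      by (simp add: \<epsilon>_def power_one_over)
  qed
  moreover have "zs \<longlonglongrightarrow> 0"
  proof (rule Lim_null_comparison)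
    show "\<forall>\<^sub>F k in sequentially. norm (zs k) \<le> \<epsilon> / 2 ^ k"
      using zs_bound by simp
    show "(\<lambda>k. \<epsilon> / 2 ^ k) \<longlonglongrightarrow> 0"
      by (rule LIMSEQ_divide_realpow_zero) simp
  qed
  then have "(\<lambda>k. zs k - zs (Suc k)) sums (zs 0 - 0)"
    by (rule telescope_sums')
  then have "(\<lambda>k. T (xs k)) sums z"
    by (simp add: zs_Suc) (simp add: zs_def)
  ultimately show ?thesis
    using that by blast
qed

lemma bounded_linear_preimage_from_approx:
  fixes T :: "'a::banach \<Rightarrow> 'b::real_normed_vector"
  assumes T: "bounded_linear T" and c: "c \<ge> 0"
    and approx: "\<And>w \<delta>. \<delta> > 0 \<Longrightarrow> \<exists>x. norm x \<le> c * norm w \<and> norm (T x - w) < \<delta>"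
  shows "\<exists>x. T x = z \<and> norm x \<le> 2 * c * norm z"
proof -
  obtain xs where xs: "\<And>k. norm (xs k) \<le> c * norm z * (1 / 2) ^ k" and sums: "(\<lambda>k. T (xs k)) sums z"
    using approx_preimage_series[OF bounded_linear.linear[OF T] c approx] by blast
  have geo: "(\<lambda>k. c * norm z * (1 / 2) ^ k) sums (c * norm z * 2)"
    using sums_mult[OF geometric_sums[of "1 / 2 :: real"]] by simp
  have abs_summable: "summable (\<lambda>k. norm (xs k))"
    by (rule summable_comparison_test[OF _ sums_summable[OF geo]]) (use xs in auto)
  have "norm (suminf xs) \<le> (\<Sum>k. norm (xs k))"
    by (rule summable_norm[OF abs_summable])
  also have "\<dots> \<le> (\<Sum>k. c * norm z * (1 / 2) ^ k)"
    by (rule suminf_le[OF xs abs_summable sums_summable[OF geo]])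
  also have "\<dots> = 2 * c * norm z"
    using sums_unique[OF geo] by simp
  finally have "norm (suminf xs) \<le> 2 * c * norm z" .
  moreover have "(\<lambda>k. T (xs k)) sums T (suminf xs)"
    using bounded_linear.sums[OF T summable_sums[OF summable_norm_cancel[OF abs_summable]]] .
  then have "T (suminf xs) = z"
    using sums sums_unique2 by blast
  ultimately show ?thesis
    by blast
qed

lemma surj_bounded_linear_bounded_preimage:
  fixes T :: "'a::banach \<Rightarrow> 'b::banach"
  assumes T: "bounded_linear T" and surj: "surj T"
  obtains C where "\<And>z. \<exists>x. T x = z \<and> norm x \<le> C * norm z"
proof -
  obtain \<rho> y e where e: "e > 0" and sub: "ball y e \<subseteq> closure (T ` ball 0 \<rho>)"
    using surj_closure_image_ball_contains_ball[OF surj] by blast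
  have "\<rho> > 0"
    using sub e by (metis all_not_in_conv ball_eq_empty centre_in_ball closure_empty image_empty
        not_less subset_empty)
  have centred: "ball 0 e \<subseteq> closure (T ` ball 0 (2 * \<rho>))"
    using linear_closure_image_ball_centred[OF bounded_linear.linear[OF T] sub] .
  have "2 * (2 * \<rho>) / e \<ge> 0"
    using \<open>\<rho> > 0\<close> e by simp
  then show ?thesis
    using bounded_linear_preimage_from_approx[OF T _
        linear_approx_preimage[OF bounded_linear.linear[OF T] e centred]] that
    by blast
qed

lemma bounded_linear_inv:
  fixes T :: "'a::banach \<Rightarrow> 'b::banach"
  assumes T: "bounded_linear T" and "bij T"
  shows "bounded_linear (inv T)"
proof -
  interpret T: bounded_linear T by fact
  obtain C where C: "\<And>z. \<exists>x. T x = z \<and> norm x \<le> C * norm z"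
    using surj_bounded_linear_bounded_preimage[OF T bij_is_surj[OF \<open>bij T\<close>]] by blast
  have inv_eq: "inv T z = x" if "T x = z" for z x
    using \<open>bij T\<close> that by (simp add: bij_is_inj inv_f_eq)
  have T_inv: "T (inv T z) = z" for z
    using \<open>bij T\<close> by (simp add: bij_is_surj surj_f_inv_f)
  show ?thesis
  proof (rule bounded_linear_intro[where K = C])
    show "norm (inv T z) \<le> norm z * C" for z
      using C[of z] inv_eq by (metis mult.commute)
  qed (auto intro!: inv_eq simp: T.add T.scaleR T_inv)
qed

definition id_factors_through :: "('a::real_normed_vector \<Rightarrow> 'a) \<Rightarrow> bool" where
  "id_factors_through T \<longleftrightarrow>
     (\<exists>R S :: 'a \<Rightarrow> 'a. bounded_linear R \<and> bounded_linear S \<and> (\<forall>x. S (T (R x)) = x))"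

lemma id_factors_through_comp_left:
  fixes T U :: "'a::real_normed_vector \<Rightarrow> 'a"
  assumes "bounded_linear U" and "id_factors_through (U \<circ> T)"
  shows "id_factors_through T"
proof -
  obtain R S :: "'a \<Rightarrow> 'a" where "bounded_linear R" and "bounded_linear S" and "\<And>x. S (U (T (R x))) = x"
    using assms(2) unfolding id_factors_through_def comp_def by metis
  then show ?thesis
    unfolding id_factors_through_def
    using bounded_linear_compose[OF \<open>bounded_linear S\<close> assms(1)]
    by (intro exI[of _ R] exI[of _ "\<lambda>x. S (U x)"]) auto
qed

lemma id_factors_through_comp_right:
  fixes T V :: "'a::real_normed_vector \<Rightarrow> 'a"
  assumes "bounded_linear V" and "id_factors_through (T \<circ> V)"
  shows "id_factors_through T"
proof -
  obtain R S :: "'a \<Rightarrow> 'a" where "bounded_linear R" and "bounded_linear S" and "\<And>x. S (T (V (R x))) = x"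
    using assms(2) unfolding id_factors_through_def comp_def by metis
  then show ?thesis
    unfolding id_factors_through_def
    using bounded_linear_compose[OF assms(1) \<open>bounded_linear R\<close>]
    by (intro exI[of _ "\<lambda>x. V (R x)"] exI[of _ S]) auto
qed

lemma id_factors_through_bij:
  fixes T :: "'a::banach \<Rightarrow> 'a"
  assumes "bounded_linear T" and "bij T"
  shows "id_factors_through T"
  unfolding id_factors_through_def
  using bounded_linear_ident bounded_linear_inv[OF assms] bij_is_inj[OF assms(2)]
  by (metis inv_f_f)

lemma closed_hyperplane_kernel:
  fixes \<phi> :: "'a::real_normed_vector \<Rightarrow> real"
  assumes \<phi>: "bounded_linear \<phi>" and c: "\<phi> c = 1"
  shows "closed_hyperplane {x. \<phi> x = 0}"
  unfolding closed_hyperplane_def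
proof (intro conjI)
  interpret \<phi>: bounded_linear \<phi> by fact
  show "subspace {x. \<phi> x = 0}"
    by (rule linear_subspace_kernel) (rule \<phi>.linear)
  show "closed {x. \<phi> x = 0}"
    by (intro closed_Collect_eq linear_continuous_on \<phi> continuous_on_const)
  show "{x. \<phi> x = 0} \<noteq> UNIV"
    using c by (metis (mono_tags) UNIV_I mem_Collect_eq zero_neq_one)
  have "x - \<phi> x *\<^sub>R c \<in> {x. \<phi> x = 0}" for x
    using c by (simp add: \<phi>.diff \<phi>.scaleR)
  then have "x \<in> span (insert c {x. \<phi> x = 0})" for x
    unfolding span_breakdown_eq by (blast intro: span_base)
  then show "\<exists>v. span (insert v {x. \<phi> x = 0}) = UNIV"
    by blast
qed

lemma bounded_linear_inv_comp:
  fixes f :: "'a::real_normed_vector \<Rightarrow> 'b::real_normed_vector"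
  assumes f: "bounded_linear f" and K: "\<And>x. norm x \<le> K * norm (f x)"
    and P: "bounded_linear P" and PR: "range P \<subseteq> range f"
  shows "bounded_linear (inv f \<circ> P)"
proof -
  interpret f: bounded_linear f by fact
  interpret P: bounded_linear P by fact
  have "x = 0" if "f x = 0" for x
    using K[of x] that by simp
  then have "inj f"
    using linear_inj_iff_eq_0[OF f.linear] by blast
  have f_inv: "f (inv f (P x)) = P x" for x
    using PR by (meson f_inv_into_f range_subsetD)
  obtain B where B: "\<And>x. norm (P x) \<le> norm x * B"
    using P.bounded by blast
  show ?thesis
  proof (rule bounded_linear_intro[where K = "\<bar>K\<bar> * B"])
    show "(inv f \<circ> P) (x + y) = (inv f \<circ> P) x + (inv f \<circ> P) y" for x y
      by (rule injD[OF \<open>inj f\<close>]) (simp add: f_inv f.add, simp add: P.add)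
    show "(inv f \<circ> P) (r *\<^sub>R x) = r *\<^sub>R (inv f \<circ> P) x" for r x
      by (rule injD[OF \<open>inj f\<close>]) (simp add: f_inv f.scaleR, simp add: P.scaleR)
    show "norm ((inv f \<circ> P) x) \<le> norm x * (\<bar>K\<bar> * B)" for x
    proof -
      have "norm (inv f (P x)) \<le> \<bar>K\<bar> * norm (P x)"
        using K[of "inv f (P x)"] by (simp add: f_inv) (meson abs_ge_self mult_right_mono norm_ge_zero order_trans)
      also have "\<dots> \<le> \<bar>K\<bar> * (norm x * B)"
        using B by (simp add: mult_left_mono)
      finally show ?thesis by (simp add: ac_simps)
    qed
  qed
qed

text \<open>
  \<open>f\<close> is an isomorphism of \<open>X\<close> onto the closed hyperplane \<open>ker \<phi>\<close>, which contains \<open>Y\<close> but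
  not \<open>c\<close>; \<open>S\<close> is its inverse after projecting onto \<open>ker \<phi>\<close> along \<open>c\<close>.
\<close>

lemma hyperplane_retraction:
  fixes Y :: "'a::real_normed_vector set"
  assumes iso: "iso_to_hyperplanes TYPE('a)" and Y: "subspace Y" "closed Y" and c: "c \<notin> Y"
  obtains \<phi> :: "'a \<Rightarrow> real" and f S :: "'a \<Rightarrow> 'a"
  where "\<And>y. y \<in> Y \<Longrightarrow> \<phi> y = 0" "bounded_linear f" "bounded_linear S"
    "\<And>x. S (f x) = x" "\<And>x. f (S x) = x - \<phi> x *\<^sub>R c" "S c = 0"
proof -
  obtain \<phi> :: "'a \<Rightarrow> real" where \<phi>: "bounded_linear \<phi>" "\<And>y. y \<in> Y \<Longrightarrow> \<phi> y = 0" "\<phi> c = 1"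
    using bounded_functional_separating_point[OF Y c] by blast
  interpret \<phi>: bounded_linear \<phi> by fact
  obtain f :: "'a \<Rightarrow> 'a" and K where f: "bounded_linear f" "inj f" "range f = {x. \<phi> x = 0}"
    and K: "\<And>x. norm x \<le> K * norm (f x)"
    using iso closed_hyperplane_kernel[OF \<phi>(1,3)]
    unfolding iso_to_hyperplanes_def isomorphic_to_subspace_def by blast
  define P where "P x = x - \<phi> x *\<^sub>R c" for x
  have P: "bounded_linear P"
    unfolding P_def by (intro bounded_linear_sub bounded_linear_ident bounded_linear_scaleR_const \<phi>(1))
  have PR: "range P \<subseteq> range f"
    using \<phi>(3) by (auto simp: f(3) P_def \<phi>.diff \<phi>.scaleR)
  define S where "S = inv f \<circ> P"
  have fS: "f (S x) = x - \<phi> x *\<^sub>R c" for x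
  proof -
    have "x - \<phi> x *\<^sub>R c \<in> range f"
      using PR by (auto simp: P_def)
    then show ?thesis
      unfolding S_def P_def comp_def by (rule f_inv_into_f)
  qed
  have Sf: "S (f x) = x" for x
  proof -
    have "\<phi> (f x) = 0"
      using f(3) by auto
    then show ?thesis
      using f(2) by (simp add: S_def P_def)
  qed
  have "S c = 0"
    using Sf[of "S c"] Sf[of 0] fS[of c] \<phi>(3) f(1) by (simp add: linear_simps)
  moreover have "bounded_linear S"
    unfolding S_def by (rule bounded_linear_inv_comp[OF f(1) K P PR])
  ultimately show ?thesis
    using that[of \<phi> f S] \<phi>(2) f(1) fS Sf by blast
qed

lemma span_image_Diff_kernel:
  assumes "linear S" and "S c = 0"
  shows "span (S ` (A - {c})) = S ` span A"
proof -
  have "S ` A \<subseteq> insert 0 (S ` (A - {c}))"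
    using assms(2) by auto
  then have "span (S ` A) \<subseteq> span (S ` (A - {c}))"
    using span_mono span_insert_0 by metis
  moreover have "span (S ` (A - {c})) \<subseteq> span (S ` A)"
    by (intro span_mono image_mono) blast
  ultimately show ?thesis
    using linear_span_image[OF assms(1)] by blast
qed

lemma card_image_Diff_less:
  assumes "finite A" and "c \<in> A"
  shows "card (S ` (A - {c})) < card A"
  using card_image_le[of "A - {c}" S] card_Diff1_less[OF assms] assms(1) by simp

lemma cokernel_reduction:
  fixes T :: "'a::real_normed_vector \<Rightarrow> 'a"
  assumes iso: "iso_to_hyperplanes TYPE('a)"
    and T: "bounded_linear T" "inj T" "closed (range T)" and c: "c \<notin> range T"
  obtains S :: "'a \<Rightarrow> 'a" where "bounded_linear S" "surj S" "S c = 0" "inj (S \<circ> T)" "closed (range (S \<circ> T))"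
proof -
  have "subspace (range T)"
    by (rule linear_subspace_image[OF bounded_linear.linear[OF T(1)] subspace_UNIV])
  then obtain \<phi> :: "'a \<Rightarrow> real" and f S :: "'a \<Rightarrow> 'a"
    where \<phi>: "\<And>y. y \<in> range T \<Longrightarrow> \<phi> y = 0" and f: "bounded_linear f" and S: "bounded_linear S"
      and Sf: "\<And>x. S (f x) = x" and fS: "\<And>x. f (S x) = x - \<phi> x *\<^sub>R c" and "S c = 0"
    by (rule hyperplane_retraction[OF iso _ T(3) c]) (rule that)
  have fST: "f (S (T x)) = T x" for x
    using fS \<phi> by simp
  have "range (S \<circ> T) = f -` range T"
  proof (intro set_eqI iffI)
    show "x \<in> f -` range T" if "x \<in> range (S \<circ> T)" for x
      using that fST by auto
    show "x \<in> range (S \<circ> T)" if x: "x \<in> f -` range T" for x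
    proof -
      obtain y where "f x = T y"
        using x by auto
      then have "x = (S \<circ> T) y"
        using Sf by (metis comp_apply)
      then show ?thesis
        by blast
    qed
  qed
  moreover have "closed (f -` range T)"
    by (rule continuous_closed_vimage[OF T(3)]) (rule linear_continuous_at[OF f])
  ultimately have "closed (range (S \<circ> T))"
    by simp
  moreover have "inj (S \<circ> T)"
  proof (rule injI)
    fix x y assume "(S \<circ> T) x = (S \<circ> T) y"
    then have "T x = T y"
      using fST by (metis comp_apply)
    then show "x = y"
      using T(2) by (simp add: inj_eq)
  qed
  moreover have "surj S"
    using Sf by (rule surjI)
  ultimately show ?thesis
    using that S \<open>S c = 0\<close> by blast
qed

lemma kernel_reduction:
  fixes T :: "'a::real_normed_vector \<Rightarrow> 'b::real_normed_vector"
  assumes iso: "iso_to_hyperplanes TYPE('a)" and T: "linear T" and v: "T v = 0" "v \<noteq> 0"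
  obtains f S :: "'a \<Rightarrow> 'a" where "bounded_linear f" "linear S" "S v = 0" "range (T \<circ> f) = range T"
    "{x. (T \<circ> f) x = 0} = S ` {x. T x = 0}"
proof -
  have "v \<notin> {0}"
    using v(2) by simp
  then obtain \<phi> :: "'a \<Rightarrow> real" and f S :: "'a \<Rightarrow> 'a"
    where "\<And>y. y \<in> {0} \<Longrightarrow> \<phi> y = 0" and f: "bounded_linear f" and S: "bounded_linear S"
      and Sf: "\<And>x. S (f x) = x" and fS: "\<And>x. f (S x) = x - \<phi> x *\<^sub>R v" and "S v = 0"
    by (rule hyperplane_retraction[OF iso subspace_single_0 closed_singleton]) (rule that)
  have TfS: "T (f (S x)) = T x" for x
    using fS v(1) by (simp add: linear_diff[OF T] linear_scale[OF T])
  have "range T \<subseteq> range (T \<circ> f)"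
  proof
    fix y assume "y \<in> range T"
    then obtain x where "y = T x"
      by blast
    then have "y = (T \<circ> f) (S x)"
      using TfS by simp
    then show "y \<in> range (T \<circ> f)"
      by blast
  qed
  then have "range (T \<circ> f) = range T"
    by auto
  moreover have "{x. (T \<circ> f) x = 0} = S ` {x. T x = 0}"
  proof (intro set_eqI iffI)
    show "x \<in> S ` {x. T x = 0}" if "x \<in> {x. (T \<circ> f) x = 0}" for x
      using that Sf[of x] by (metis comp_apply image_eqI mem_Collect_eq)
    show "x \<in> {x. (T \<circ> f) x = 0}" if "x \<in> S ` {x. T x = 0}" for x
      using that TfS by auto
  qed
  ultimately show ?thesis
    using that f bounded_linear.linear[OF S] \<open>S v = 0\<close> by blast
qed

lemma id_factors_through_inj_closed_range:
  fixes T :: "'a::banach \<Rightarrow> 'a"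
  assumes iso: "iso_to_hyperplanes TYPE('a)" and "finite C"
  shows "bounded_linear T \<Longrightarrow> inj T \<Longrightarrow> closed (range T) \<Longrightarrow> span (range T \<union> C) = UNIV \<Longrightarrow>
    id_factors_through T"
  using assms(2)
proof (induction "card C" arbitrary: T C rule: less_induct)
  case less
  show ?case
  proof (cases "surj T")
    case True
    then show ?thesis
      using less.prems(1,2) by (intro id_factors_through_bij bijI)
  next
    case False
    obtain c where c: "c \<in> C" "c \<notin> range T"
    proof (rule ccontr)
      assume "\<not> thesis"
      then have "C \<subseteq> range T"
        using that by blast
      moreover have "subspace (range T)"
        using less.prems(1) by (intro linear_subspace_image bounded_linear.linear subspace_UNIV)
      ultimately have "span (range T \<union> C) = range T"
        by (simp add: Un_absorb2 span_eq_iff)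
      with False less.prems(4) show False
        by simp
    qed
    obtain S :: "'a \<Rightarrow> 'a" where S: "bounded_linear S" "surj S" "S c = 0"
      and ST: "inj (S \<circ> T)" "closed (range (S \<circ> T))"
      using cokernel_reduction[OF iso less.prems(1-3) c(2)] by blast
    have "(range T \<union> C) - {c} = range T \<union> (C - {c})"
      using c(2) by blast
    then have "span (range (S \<circ> T) \<union> S ` (C - {c})) = S ` span (range T \<union> C)"
      using span_image_Diff_kernel[OF bounded_linear.linear[OF S(1)] S(3), of "range T \<union> C"]
      by (simp add: image_Un image_comp)
    then have "span (range (S \<circ> T) \<union> S ` (C - {c})) = UNIV"
      using less.prems(4) S(2) by simp
    then have "id_factors_through (S \<circ> T)"
      using less.hyps[OF card_image_Diff_less[OF less.prems(5) c(1)]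
          bounded_linear_compose[OF S(1) less.prems(1), folded comp_def] ST] less.prems(5)
      by simp
    then show ?thesis
      by (rule id_factors_through_comp_left[OF S(1)])
  qed
qed

lemma id_factors_through_fredholm:
  fixes T :: "'a::banach \<Rightarrow> 'a"
  assumes iso: "iso_to_hyperplanes TYPE('a)" and "finite B"
  shows "fredholm T \<Longrightarrow> span B = {x. T x = 0} \<Longrightarrow> id_factors_through T"
  using assms(2)
proof (induction "card B" arbitrary: T B rule: less_induct)
  case less
  then obtain C where T: "bounded_linear T" and closed: "closed (range T)"
    and C: "finite C" "span (range T \<union> C) = UNIV"
    by (auto simp: fredholm_def)
  show ?case
  proof (cases "B \<subseteq> {0}")
    case True
    then have "inj T"
      using less.prems(2) span_mono[OF True] bounded_linear.linear[OF T]
      by (auto simp: linear_inj_iff_eq_0)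
    then show ?thesis
      using id_factors_through_inj_closed_range[OF iso C(1) T _ closed C(2)] by blast
  next
    case False
    then obtain v where v: "v \<in> B" "v \<noteq> 0"
      by blast
    have "T v = 0"
      using less.prems(2) span_base[OF v(1)] by blast
    then obtain f S :: "'a \<Rightarrow> 'a" where f: "bounded_linear f" and S: "linear S" "S v = 0"
      and range: "range (T \<circ> f) = range T" and kernel: "{x. (T \<circ> f) x = 0} = S ` {x. T x = 0}"
      using kernel_reduction[OF iso bounded_linear.linear[OF T] _ v(2)] by blast
    have kernel': "span (S ` (B - {v})) = {x. (T \<circ> f) x = 0}"
      using span_image_Diff_kernel[OF S] kernel less.prems(2) by simp
    have "finite (S ` (B - {v}))"
      using less.prems(3) by simp
    then have "fredholm (T \<circ> f)"
      unfolding fredholm_def range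
      using bounded_linear_compose[OF T f, folded comp_def] kernel' closed C by blast
    then have "id_factors_through (T \<circ> f)"
      using less.hyps[OF card_image_Diff_less[OF less.prems(3) v(1)] _ kernel'] \<open>finite (S ` (B - {v}))\<close>
      by blast
    then show ?thesis
      by (rule id_factors_through_comp_right[OF f])
  qed
qed

theorem lemma3p1:
  fixes T :: "'a::banach \<Rightarrow> 'a"
  assumes "iso_to_hyperplanes TYPE('a)"
    and "fredholm T"
  shows "\<exists>R S :: 'a \<Rightarrow> 'a. bounded_linear R \<and> bounded_linear S \<and> (\<forall>x. S (T (R x)) = x)"
proof -
  obtain B where "finite B" "span B = {x. T x = 0}"
    using assms(2) by (auto simp: fredholm_def)
  then have "id_factors_through T"
    using id_factors_through_fredholm[OF assms(1)] assms(2) by blast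
  then show ?thesis
    by (simp add: id_factors_through_def)
qed

end
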